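(* Fix a constant $\Delta$. There is no LCL problem on general graphs of maximum degree at most $\Delta$ with mending radius between $\omega(1)$ and $o(\log n)$: if such an LCL problem $\Pi$ is $T$-mendable for some function $T$ with $T(n)=o(\log n)$, then $\Pi$ is $T'$-mendable for some constant function $T'$.
   Context: A locally verifiable problem $\Pi$ on a graph family $\mathcal{G}$ is given by a set $\Sigma$ of input labels, a set $\Gamma$ of output labels and a verifier $\psi$ with verification radius $r$: $\psi(G,\lambda,v)\in\{\text{happy},\text{unhappy}\}$ depends only on the radius-$r$ neighborhood of $v$ (structure, inputs and outputs, up to isomorphism); $\lambda:V\to\Gamma$ is a solution if $\psi$ is happy everywhere. $\Pi$ is an LCL problem if $\Sigma,\Gamma$ are finite and all graphs in $\mathcal{G}$ have maximum degree bounded by a constant. Partial labelings are maps $\lambda:V\to\Gamma\cup\{\bot\}$; the relaxed verifier $\psi^*$ is happy at $v$ if some node within distance $r$ of $v$ has label $\bot$, and otherwise $\psi^*(G,\lambda,v)=\psi(G,\lambda',v)$ for any $\lambda':V\to\Gamma$ agreeing with $\lambda$ on the radius-$r$ neighborhood of $v$; $\psi^*$ accepts $\lambda$ if happy everywhere. Given $\lambda$ accepted by $\psi^*$ and node $v$, a $t$-mend of $\lambda$ at $v$ is a partial labeling $\mu$ accepted by $\psi^*$ with $\mu(v)\neq\bot$, $\mu(u)=\bot\Rightarrow\lambda(u)=\bot$, and $\mu(u)\neq\lambda(u)\Rightarrow\mathrm{dist}(u,v)\le t$. A verifier is $T$-mendable if for every $G\in\mathcal{G}$ with $n$ nodes,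 every $\lambda$ accepted by $\psi^*$ and every node $v$, a $T(n)$-mend at $v$ exists; $\Pi$ is $T$-mendable if some radius-$r$ verifier for $\Pi$ (accepting exactly the solutions of $\Pi$) is $T$-mendable. *)

theory Defs
  imports Complex_Main "HOL-Library.Landau_Symbols"
begin

type_synonym graph = "nat set \<times> (nat \<times> nat) set"

definition wf_graph :: "graph \<Rightarrow> bool" where
  "wf_graph G \<longleftrightarrow> finite (fst G) \<and> snd G \<subseteq> fst G \<times> fst G
     \<and> (\<forall>x y. (x, y) \<in> snd G \<longrightarrow> (y, x) \<in> snd G)
     \<and> (\<forall>x. (x, x) \<notin> snd G)"

definition max_deg_le :: "nat \<Rightarrow> graph \<Rightarrow> bool" where
  "max_deg_le \<Delta> G \<longleftrightarrow> (\<forall>v\<in>fst G. card {u. (v, u) \<in> snd G} \<le> \<Delta>)"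

definition bounded_graph :: "nat \<Rightarrow> graph \<Rightarrow> bool" where
  "bounded_graph \<Delta> G \<longleftrightarrow> wf_graph G \<and> max_deg_le \<Delta> G"

fun dist_le :: "graph \<Rightarrow> nat \<Rightarrow> nat \<Rightarrow> nat \<Rightarrow> bool" where
  "dist_le G 0 v u = (u = v \<and> v \<in> fst G)"
| "dist_le G (Suc k) v u = (dist_le G k v u \<or> (\<exists>w. dist_le G k v w \<and> (w, u) \<in> snd G))"

definition ball :: "graph \<Rightarrow> nat \<Rightarrow> nat \<Rightarrow> nat set" where
  "ball G k v = {u \<in> fst G. dist_le G k v u}"

definition local_iso ::
  "nat \<Rightarrow> graph \<Rightarrow> (nat \<Rightarrow> 'i) \<Rightarrow> (nat \<Rightarrow> 'o) \<Rightarrow> nat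
   \<Rightarrow> graph \<Rightarrow> (nat \<Rightarrow> 'i) \<Rightarrow> (nat \<Rightarrow> 'o) \<Rightarrow> nat \<Rightarrow> (nat \<Rightarrow> nat) \<Rightarrow> bool" where
  "local_iso r G inp lab v G' inp' lab' v' f \<longleftrightarrow>
     bij_betw f (ball G r v) (ball G' r v') \<and> f v = v'
     \<and> (\<forall>x\<in>ball G r v. \<forall>y\<in>ball G r v. ((x, y) \<in> snd G \<longleftrightarrow> (f x, f y) \<in> snd G'))
     \<and> (\<forall>x\<in>ball G r v. inp' (f x) = inp x \<and> lab' (f x) = lab x)"

text \<open>A verifier: given graph, input labelling, output labelling, node; True = happy.\<close>
type_synonym ('i, 'o) verifier = "graph \<Rightarrow> (nat \<Rightarrow> 'i) \<Rightarrow> (nat \<Rightarrow> 'o) \<Rightarrow> nat \<Rightarrow> bool"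

definition is_verifier :: "nat \<Rightarrow> nat \<Rightarrow> ('i, 'o) verifier \<Rightarrow> bool" where
  "is_verifier \<Delta> r \<psi> \<longleftrightarrow>
     (\<forall>G G' inp inp' lab lab' v v' f.
        bounded_graph \<Delta> G \<and> bounded_graph \<Delta> G' \<and> v \<in> fst G \<and> v' \<in> fst G'
        \<and> local_iso r G inp lab v G' inp' lab' v' f
        \<longrightarrow> \<psi> G inp lab v = \<psi> G' inp' lab' v')"

definition is_LCL :: "nat \<Rightarrow> nat \<Rightarrow> ('i, 'o) verifier \<Rightarrow> bool" where
  "is_LCL \<Delta> r \<psi> \<longleftrightarrow> finite (UNIV :: 'i set) \<and> finite (UNIV :: 'o set) \<and> is_verifier \<Delta> r \<psi>"

definition solution :: "('i, 'o) verifier \<Rightarrow> graph \<Rightarrow> (nat \<Rightarrow> 'i) \<Rightarrow> (nat \<Rightarrow> 'o) \<Rightarrow> bool" where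
  "solution \<psi> G inp lab \<longleftrightarrow> (\<forall>v\<in>fst G. \<psi> G inp lab v)"

text \<open>Relaxed verifier psi* on partial labellings (None = bottom).\<close>
definition relaxed :: "nat \<Rightarrow> ('i, 'o) verifier \<Rightarrow> graph \<Rightarrow> (nat \<Rightarrow> 'i) \<Rightarrow> (nat \<Rightarrow> 'o option) \<Rightarrow> nat \<Rightarrow> bool" where
  "relaxed r \<psi> G inp \<mu> v \<longleftrightarrow>
     (\<exists>u\<in>ball G r v. \<mu> u = None)
     \<or> (\<forall>lab. (\<forall>u\<in>ball G r v. \<mu> u = Some (lab u)) \<longrightarrow> \<psi> G inp lab v)"

definition accepts_relaxed :: "nat \<Rightarrow> ('i, 'o) verifier \<Rightarrow> graph \<Rightarrow> (nat \<Rightarrow> 'i) \<Rightarrow> (nat \<Rightarrow> 'o option) \<Rightarrow> bool" where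
  "accepts_relaxed r \<psi> G inp \<mu> \<longleftrightarrow> (\<forall>v\<in>fst G. relaxed r \<psi> G inp \<mu> v)"

definition is_mend :: "nat \<Rightarrow> ('i, 'o) verifier \<Rightarrow> graph \<Rightarrow> (nat \<Rightarrow> 'i)
    \<Rightarrow> (nat \<Rightarrow> 'o option) \<Rightarrow> (nat \<Rightarrow> 'o option) \<Rightarrow> nat \<Rightarrow> nat \<Rightarrow> bool" where
  "is_mend r \<psi> G inp lam \<mu> v t \<longleftrightarrow>
     accepts_relaxed r \<psi> G inp \<mu> \<and> \<mu> v \<noteq> None
     \<and> (\<forall>u\<in>fst G. \<mu> u = None \<longrightarrow> lam u = None)
     \<and> (\<forall>u\<in>fst G. \<mu> u \<noteq> lam u \<longrightarrow> dist_le G t v u)"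

definition verifier_mendable :: "nat \<Rightarrow> nat \<Rightarrow> ('i, 'o) verifier \<Rightarrow> (nat \<Rightarrow> nat) \<Rightarrow> bool" where
  "verifier_mendable \<Delta> r \<psi> T \<longleftrightarrow>
     (\<forall>G inp lam v. bounded_graph \<Delta> G \<and> accepts_relaxed r \<psi> G inp lam \<and> v \<in> fst G
        \<longrightarrow> (\<exists>\<mu>. is_mend r \<psi> G inp lam \<mu> v (T (card (fst G)))))"

definition problem_mendable :: "nat \<Rightarrow> nat \<Rightarrow> ('i, 'o) verifier \<Rightarrow> (nat \<Rightarrow> nat) \<Rightarrow> bool" where
  "problem_mendable \<Delta> r \<psi> T \<longleftrightarrow>
     (\<exists>\<psi>'. is_verifier \<Delta> r \<psi>'
        \<and> (\<forall>G inp lab. bounded_graph \<Delta> G \<longrightarrow> (solution \<psi>' G inp lab \<longleftrightarrow> solution \<psi> G inp lab))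
        \<and> verifier_mendable \<Delta> r \<psi>' T)"

end

theory Submission
  imports Defs
begin

text \<open>
  If \<open>T(n) = o(log n)\<close>, some \<open>n\<^sub>0\<close> satisfies \<open>(\<Delta> + 1)\<^bsup>T(n\<^sub>0) + 3r\<^esup> \<le> n\<^sub>0\<close>.
  To mend a partial labelling at \<open>v\<close> in an arbitrary graph, copy the ball of radius
  \<open>R = T(n\<^sub>0) + 3r\<close> around \<open>v\<close> into a graph with exactly \<open>n\<^sub>0\<close> nodes (padding with
  isolated nodes), keep only the labels within distance \<open>T(n\<^sub>0) + 2r\<close> of \<open>v\<close>, mend there
  with radius \<open>T(n\<^sub>0)\<close>, and paste the changes back. Every node whose radius-\<open>r\<close> view
  meets a changed node lies within \<open>T(n\<^sub>0) + r\<close> of \<open>v\<close>, so it sees the same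
  neighbourhood and labels as in the copy, and the verifier accepts there as well.
  Hence the constant \<open>T(n\<^sub>0)\<close> is a mending radius on all graphs.
\<close>

lemma eventually_pow_mult_le_of_smallo_ln:
  fixes T :: "nat \<Rightarrow> nat" and a K :: nat
  assumes "(\<lambda>n. real (T n)) \<in> o(\<lambda>n. ln (real n))"
  shows "eventually (\<lambda>n. a ^ T n * K \<le> n) at_top"
proof -
  define b where "b = max a 2"
  have ln_b: "ln (real b) > 0"
    by (simp add: b_def)
  \<comment> \<open>This choice of \<open>c\<close> gives \<open>b ^ T n \<le> \<surd>n\<close>; eventually also \<open>K \<le> \<surd>n\<close>.\<close>
  define c where "c = 1 / (2 * ln b)"
  have "c > 0"
    using ln_b by (simp add: c_def)
  from landau_o.smallD[OF assms this]
  have "eventually (\<lambda>n. norm (real (T n)) \<le> c * norm (ln (real n))) at_top" .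
  moreover have "eventually (\<lambda>n. max 1 (K\<^sup>2) \<le> n) at_top"
    by (rule eventually_ge_at_top)
  ultimately show ?thesis
  proof eventually_elim
    case (elim n)
    then have n_pos: "real n > 0" and K_le: "K\<^sup>2 \<le> n"
      by auto
    have "real (2 * T n) * ln b \<le> ln (real n)"
      using elim ln_b n_pos by (simp add: c_def field_simps)
    then have "exp (real (2 * T n) * ln b) \<le> exp (ln (real n))"
      by simp
    then have "exp (ln (real b)) ^ (2 * T n) \<le> real n"
      using n_pos by (simp only: exp_of_nat_mult exp_ln)
    then have "real b ^ (2 * T n) \<le> real n"
      by (simp add: b_def)
    then have "(b ^ T n)\<^sup>2 \<le> n"
      by (metis of_nat_le_iff of_nat_power power_mult mult.commute)
    from mult_le_mono[OF this K_le]
    have "(b ^ T n * K)\<^sup>2 \<le> n\<^sup>2"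
      by (simp add: power_mult_distrib power2_eq_square[of n])
    then have "b ^ T n * K \<le> n"
      by (rule power2_le_imp_le) simp
    moreover have "a ^ T n \<le> b ^ T n"
      by (simp add: b_def power_mono)
    ultimately show ?case
      by (meson le_trans mult_le_mono1)
  qed
qed

lemma dist_le_in_verts:
  assumes "wf_graph G" "dist_le G k v u"
  shows "v \<in> fst G" "u \<in> fst G"
  using assms(2) by (induction k arbitrary: u) (use assms(1) in \<open>auto simp: wf_graph_def\<close>)

lemma dist_le_refl: "v \<in> fst G \<Longrightarrow> dist_le G k v v"
  by (induction k) auto

lemma dist_le_mono:
  assumes "dist_le G a v u" "a \<le> b"
  shows "dist_le G b v u"
  using assms(2) by (induction b rule: dec_induct) (use assms(1) in auto)

lemma dist_le_trans: "dist_le G a v w \<Longrightarrow> dist_le G b w u \<Longrightarrow> dist_le G (a + b) v u"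
  by (induction b arbitrary: u) auto

lemma dist_le_sym:
  assumes "wf_graph G" "dist_le G k v u"
  shows "dist_le G k u v"
  using assms(2)
proof (induction k arbitrary: u)
  case (Suc k)
  show ?case
  proof (cases "dist_le G k v u")
    case False
    then obtain x where "dist_le G k v x" "(x, u) \<in> snd G"
      using Suc.prems by auto
    moreover from this(2) have "dist_le G 1 u x"
      using assms(1) by (auto simp: wf_graph_def)
    ultimately show ?thesis
      using dist_le_trans[of G 1 u x k v] Suc.IH by simp
  qed (use Suc.IH in simp)
qed simp

lemma dist_le_subgraph:
  "snd H \<subseteq> snd G \<Longrightarrow> v \<in> fst G \<Longrightarrow> dist_le H k v u \<Longrightarrow> dist_le G k v u"
  by (induction k arbitrary: u) auto

lemma mem_ball_iff: "wf_graph G \<Longrightarrow> u \<in> ball G k v \<longleftrightarrow> dist_le G k v u"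
  by (auto simp: ball_def dest: dist_le_in_verts)

lemma card_ball_le:
  assumes "bounded_graph \<Delta> G"
  shows "card (ball G k v) \<le> (\<Delta> + 1) ^ k"
proof (induction k)
  case 0
  have "ball G 0 v \<subseteq> {v}"
    by (auto simp: ball_def)
  then show ?case
    using card_mono[of "{v}"] by fastforce
next
  case (Suc k)
  have wf: "wf_graph G" and deg: "max_deg_le \<Delta> G"
    using assms by (auto simp: bounded_graph_def)
  let ?N = "\<lambda>w. {u. (w, u) \<in> snd G}"
  have fin_ball: "finite (ball G k v)"
    using wf by (auto simp: ball_def wf_graph_def)
  have fin_N: "finite (?N w)" for w
    using wf by (auto simp: wf_graph_def intro: finite_subset[of _ "fst G"])
  have "ball G (Suc k) v \<subseteq> ball G k v \<union> (\<Union>w\<in>ball G k v. ?N w)"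
    using wf by (auto simp: mem_ball_iff)
  then have "card (ball G (Suc k) v) \<le> card (ball G k v \<union> (\<Union>w\<in>ball G k v. ?N w))"
    by (rule card_mono[rotated]) (use fin_ball fin_N in auto)
  also have "\<dots> \<le> card (ball G k v) + (\<Sum>w\<in>ball G k v. card (?N w))"
    using card_Un_le card_UN_le[OF fin_ball] add_left_mono le_trans by blast
  also have "\<dots> \<le> card (ball G k v) + (\<Sum>w\<in>ball G k v. \<Delta>)"
    using deg by (intro add_left_mono sum_mono) (auto simp: max_deg_le_def ball_def)
  also have "\<dots> = card (ball G k v) * (\<Delta> + 1)"
    by simp
  also have "\<dots> \<le> (\<Delta> + 1) ^ Suc k"
    using Suc.IH by (metis mult_le_mono1 power_Suc2)
  finally show ?case .
qed

lemma relaxed_cong: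
  "\<forall>u\<in>ball G r w. \<mu> u = \<mu>' u \<Longrightarrow> relaxed r \<psi> G inp \<mu> w \<longleftrightarrow> relaxed r \<psi> G inp \<mu>' w"
  by (simp add: relaxed_def)

lemma relaxed_transfer:
  assumes "is_verifier \<Delta> r \<psi>" "bounded_graph \<Delta> G" "bounded_graph \<Delta> G'"
    and "w \<in> fst G" "w \<in> fst G'"
    and balls: "ball G r w = ball G' r w"
    and "\<forall>x\<in>ball G r w. \<forall>y\<in>ball G r w. (x, y) \<in> snd G \<longleftrightarrow> (x, y) \<in> snd G'"
    and "relaxed r \<psi> G inp \<mu> w"
  shows "relaxed r \<psi> G' inp \<mu> w"
proof -
  have "\<psi> G' inp lab w" if "\<psi> G inp lab w" for lab
  proof -
    have "local_iso r G inp lab w G' inp lab w id"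
      using assms(6,7) by (auto simp: local_iso_def bij_betw_def)
    then show ?thesis
      using assms(1-5) that unfolding is_verifier_def by blast
  qed
  then show ?thesis
    using assms(8) by (auto simp: relaxed_def balls)
qed

lemma ball_subset_ball:
  assumes "wf_graph G" "dist_le G d v w" "d + k \<le> R"
  shows "ball G k w \<subseteq> ball G R v"
  using assms dist_le_trans[OF assms(2)] dist_le_mono by (fastforce simp: mem_ball_iff)

lemma padded_induced_subgraph:
  assumes bounded: "bounded_graph \<Delta> G" and "B \<subseteq> fst G" "card B \<le> n"
  obtains H where "bounded_graph \<Delta> H" "B \<subseteq> fst H" "snd H = snd G \<inter> (B \<times> B)"
    "card (fst H) = n"
proof -
  have wf: "wf_graph G"
    using bounded by (simp add: bounded_graph_def)
  then have "finite B"
    using assms(2) finite_subset by (auto simp: wf_graph_def)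
  then obtain P where P: "P \<subseteq> - B" "finite P" "card P = n - card B"
    using infinite_arbitrarily_large[of "- B"] by (auto simp: Compl_eq_Diff_UNIV Diff_infinite_finite)
  define H :: graph where "H = (B \<union> P, snd G \<inter> (B \<times> B))"
  have "wf_graph H"
    using wf \<open>finite B\<close> P(2) by (auto simp: H_def wf_graph_def)
  moreover have "card {u. (x, u) \<in> snd H} \<le> \<Delta>" for x
  proof (cases "x \<in> B")
    case True
    have "finite {u. (x, u) \<in> snd G}"
      using wf by (auto simp: wf_graph_def intro: finite_subset[of _ "fst G"])
    then have "card {u. (x, u) \<in> snd H} \<le> card {u. (x, u) \<in> snd G}"
      by (rule card_mono) (auto simp: H_def)
    also have "\<dots> \<le> \<Delta>"
      using bounded True assms(2) by (auto simp: bounded_graph_def max_deg_le_def)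
    finally show ?thesis .
  qed (simp add: H_def)
  ultimately have "bounded_graph \<Delta> H"
    by (simp add: bounded_graph_def max_deg_le_def)
  moreover have "card (fst H) = n"
    using P \<open>finite B\<close> assms(3) card_Un_disjoint[of B P] by (auto simp: H_def)
  ultimately show thesis
    by (intro that) (auto simp: H_def)
qed

definition restrict_ball :: "graph \<Rightarrow> nat \<Rightarrow> nat \<Rightarrow> (nat \<Rightarrow> 'o option) \<Rightarrow> nat \<Rightarrow> 'o option" where
  "restrict_ball G k v lab u = (if u \<in> ball G k v then lab u else None)"

definition patch :: "graph \<Rightarrow> nat \<Rightarrow> nat \<Rightarrow> (nat \<Rightarrow> 'o option) \<Rightarrow> (nat \<Rightarrow> 'o option) \<Rightarrow> nat \<Rightarrow> 'o option" where
  "patch G k v \<mu> lab u = (if dist_le G k v u then \<mu> u else lab u)"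

locale ball_copy =
  fixes \<Delta> r :: nat and \<psi> :: "('i, 'o) verifier" and G H :: graph and v R :: nat
  assumes verifier: "is_verifier \<Delta> r \<psi>"
    and bounded_G: "bounded_graph \<Delta> G" and bounded_H: "bounded_graph \<Delta> H"
    and centre: "v \<in> fst G"
    and ball_subset: "ball G R v \<subseteq> fst H"
    and edges_H: "snd H = snd G \<inter> (ball G R v \<times> ball G R v)"
begin

lemma wf_G: "wf_graph G" and wf_H: "wf_graph H"
  using bounded_G bounded_H by (simp_all add: bounded_graph_def)

lemma near_centre_in_copy: "dist_le G d v w \<Longrightarrow> d \<le> R \<Longrightarrow> w \<in> fst H"
  using ball_subset dist_le_mono[of G d v w R] mem_ball_iff[OF wf_G] by blast

lemma dist_le_copy_iff:
  assumes "dist_le G d v w" "d + k \<le> R"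
  shows "dist_le H k w u \<longleftrightarrow> dist_le G k w u"
proof
  show "dist_le H k w u \<Longrightarrow> dist_le G k w u"
    using dist_le_subgraph[of H G w] dist_le_in_verts[OF wf_G assms(1)] edges_H by blast
  show "dist_le G k w u \<Longrightarrow> dist_le H k w u"
    using assms(2)
  proof (induction k arbitrary: u)
    case 0
    then show ?case
      using near_centre_in_copy[OF assms(1)] by simp
  next
    case (Suc k)
    show ?case
    proof (cases "dist_le G k w u")
      case False
      then obtain x where x: "dist_le G k w x" "(x, u) \<in> snd G"
        using Suc.prems by auto
      then have "dist_le G (Suc k) w u"
        by auto
      moreover have "ball G k w \<subseteq> ball G R v" "ball G (Suc k) w \<subseteq> ball G R v"
        using ball_subset_ball[OF wf_G assms(1)] Suc.prems(2) by auto
      moreover have "x \<in> ball G k w" "u \<in> ball G (Suc k) w"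
        using x(1) \<open>dist_le G (Suc k) w u\<close> by (simp_all only: mem_ball_iff[OF wf_G])
      ultimately have "{x, u} \<subseteq> ball G R v"
        by blast
      then show ?thesis
        using Suc x edges_H by auto
    qed (use Suc in simp)
  qed
qed

lemma ball_copy_eq:
  assumes "dist_le G d v w" "d + k \<le> R"
  shows "ball H k w = ball G k w"
  using dist_le_copy_iff[OF assms] wf_G wf_H by (auto simp: mem_ball_iff)

lemma relaxed_copy_iff:
  assumes "dist_le G d v w" "d + r \<le> R" "\<forall>u\<in>ball G r w. \<mu> u = \<mu>' u"
  shows "relaxed r \<psi> H inp \<mu> w \<longleftrightarrow> relaxed r \<psi> G inp \<mu>' w"
proof -
  have balls: "ball H r w = ball G r w"
    by (rule ball_copy_eq[OF assms(1,2)])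
  have near: "ball G r w \<subseteq> ball G R v"
    by (rule ball_subset_ball[OF wf_G assms(1,2)])
  have "w \<in> fst G" "w \<in> fst H"
    using dist_le_in_verts[OF wf_G assms(1)] near_centre_in_copy[OF assms(1)] assms(2) by simp_all
  moreover have "\<forall>x\<in>ball G r w. \<forall>y\<in>ball G r w. (x, y) \<in> snd G \<longleftrightarrow> (x, y) \<in> snd H"
    using near edges_H by auto
  ultimately have "relaxed r \<psi> H inp \<mu> w \<longleftrightarrow> relaxed r \<psi> G inp \<mu> w"
    using relaxed_transfer[OF verifier bounded_G bounded_H] relaxed_transfer[OF verifier bounded_H bounded_G]
      balls by metis
  also have "\<dots> \<longleftrightarrow> relaxed r \<psi> G inp \<mu>' w"
    by (rule relaxed_cong[OF assms(3)])
  finally show ?thesis .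
qed

lemma accepts_relaxed_restrict_ball:
  assumes "accepts_relaxed r \<psi> G inp lab" "s + r \<le> R"
  shows "accepts_relaxed r \<psi> H inp (restrict_ball G s v lab)"
  unfolding accepts_relaxed_def
proof
  fix w
  assume "w \<in> fst H"
  show "relaxed r \<psi> H inp (restrict_ball G s v lab) w"
  proof (cases "\<exists>u\<in>ball H r w. restrict_ball G s v lab u = None")
    case True
    then show ?thesis
      by (simp add: relaxed_def)
  next
    case False
    moreover have "w \<in> ball H r w"
      using \<open>w \<in> fst H\<close> by (simp add: ball_def dist_le_refl)
    ultimately have "w \<in> ball G s v"
      by (metis restrict_ball_def)
    then have near: "dist_le G s v w" and "w \<in> fst G"
      by (auto simp: ball_def)
    have "\<forall>u\<in>ball G r w. restrict_ball G s v lab u = lab u"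
      using False ball_copy_eq[OF near] assms(2) by (auto simp: restrict_ball_def)
    then have "relaxed r \<psi> H inp (restrict_ball G s v lab) w \<longleftrightarrow> relaxed r \<psi> G inp lab w"
      by (rule relaxed_copy_iff[OF near assms(2)])
    then show ?thesis
      using assms(1) \<open>w \<in> fst G\<close> by (simp add: accepts_relaxed_def)
  qed
qed

lemma patch_eq_copy_mend:
  assumes mend: "is_mend r \<psi> H inp (restrict_ball G s v lab) \<mu> v t"
    and "dist_le G s v u" "s \<le> R"
  shows "patch G t v \<mu> lab u = \<mu> u"
proof (cases "dist_le G t v u")
  case False
  have "u \<in> ball G s v"
    using assms(2) wf_G by (simp add: mem_ball_iff)
  moreover have "u \<in> fst H"
    using near_centre_in_copy assms(2,3) by blast
  moreover have "\<not> dist_le H t v u"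
    using False dist_le_subgraph[OF _ centre] edges_H by blast
  ultimately have "\<mu> u = lab u"
    using mend by (auto simp: is_mend_def restrict_ball_def)
  then show ?thesis
    using False by (simp add: patch_def)
qed (simp add: patch_def)

lemma accepts_relaxed_patch:
  assumes acc: "accepts_relaxed r \<psi> G inp lab" and "t + 3 * r \<le> R"
    and mend: "is_mend r \<psi> H inp (restrict_ball G (t + 2 * r) v lab) \<mu> v t"
  shows "accepts_relaxed r \<psi> G inp (patch G t v \<mu> lab)"
  unfolding accepts_relaxed_def
proof
  fix w
  assume "w \<in> fst G"
  show "relaxed r \<psi> G inp (patch G t v \<mu> lab) w"
  proof (cases "\<forall>u\<in>ball G r w. patch G t v \<mu> lab u = lab u")
    case True
    then show ?thesis
      using relaxed_cong acc \<open>w \<in> fst G\<close> by (metis accepts_relaxed_def)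
  next
    case False
    then obtain u where "u \<in> ball G r w" "dist_le G t v u"
      by (auto simp: patch_def split: if_splits)
    then have near: "dist_le G (t + r) v w"
      using dist_le_trans dist_le_sym[OF wf_G] by (auto simp: ball_def)
    have "\<forall>x\<in>ball G r w. \<mu> x = patch G t v \<mu> lab x"
    proof
      fix x
      assume "x \<in> ball G r w"
      then have "dist_le G (t + 2 * r) v x"
        using dist_le_trans[OF near, of r x] by (simp add: ball_def mult_2 add.assoc)
      then show "\<mu> x = patch G t v \<mu> lab x"
        using patch_eq_copy_mend[OF mend] assms(2) by simp
    qed
    moreover have "w \<in> fst H"
      using near_centre_in_copy[OF near] assms(2) by simp
    then have "relaxed r \<psi> H inp \<mu> w"
      using mend by (simp add: is_mend_def accepts_relaxed_def)
    ultimately show ?thesis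
      using relaxed_copy_iff[OF near] assms(2) by auto
  qed
qed

lemma is_mend_patch:
  assumes acc: "accepts_relaxed r \<psi> G inp lab" and "t + 3 * r \<le> R"
    and mend: "is_mend r \<psi> H inp (restrict_ball G (t + 2 * r) v lab) \<mu> v t"
  shows "is_mend r \<psi> G inp lab (patch G t v \<mu> lab) v t"
  unfolding is_mend_def
proof (intro conjI ballI impI)
  show "accepts_relaxed r \<psi> G inp (patch G t v \<mu> lab)"
    by (rule accepts_relaxed_patch[OF assms])
  show "patch G t v \<mu> lab v \<noteq> None"
    using mend dist_le_refl[OF centre] by (simp add: patch_def is_mend_def)
next
  fix u
  assume "u \<in> fst G" and none: "patch G t v \<mu> lab u = None"
  show "lab u = None"
  proof (cases "dist_le G t v u")
    case True
    then have "dist_le G (t + 2 * r) v u"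
      by (rule dist_le_mono) simp
    moreover have "u \<in> fst H"
      using near_centre_in_copy[OF True] assms(2) by simp
    ultimately show ?thesis
      using mend none True wf_G by (auto simp: patch_def is_mend_def restrict_ball_def mem_ball_iff)
  qed (use none in \<open>simp add: patch_def\<close>)
next
  fix u
  assume "u \<in> fst G" "patch G t v \<mu> lab u \<noteq> lab u"
  then show "dist_le G t v u"
    by (auto simp: patch_def split: if_splits)
qed

end

lemma mend_of_small_ball:
  assumes verifier: "is_verifier \<Delta> r \<psi>" and mendable: "verifier_mendable \<Delta> r \<psi> T"
    and bounded: "bounded_graph \<Delta> G" and acc: "accepts_relaxed r \<psi> G inp lab"
    and "v \<in> fst G" and small: "card (ball G (T n + 3 * r) v) \<le> n"
  shows "\<exists>\<mu>. is_mend r \<psi> G inp lab \<mu> v (T n)"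
proof -
  let ?R = "T n + 3 * r"
  obtain H where H: "bounded_graph \<Delta> H" "ball G ?R v \<subseteq> fst H"
    "snd H = snd G \<inter> (ball G ?R v \<times> ball G ?R v)" "card (fst H) = n"
    using padded_induced_subgraph[OF bounded _ small] by (auto simp: ball_def)
  interpret ball_copy \<Delta> r \<psi> G H v ?R
    using verifier bounded H \<open>v \<in> fst G\<close> by unfold_locales
  have "accepts_relaxed r \<psi> H inp (restrict_ball G (T n + 2 * r) v lab)"
    using accepts_relaxed_restrict_ball[OF acc] by simp
  moreover have "v \<in> fst H"
    using near_centre_in_copy[of 0 v] \<open>v \<in> fst G\<close> by simp
  ultimately obtain \<mu> where "is_mend r \<psi> H inp (restrict_ball G (T n + 2 * r) v lab) \<mu> v (T n)"
    using mendable H(1,4) unfolding verifier_mendable_def by blast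
  then show ?thesis
    using is_mend_patch[OF acc order_refl] by blast
qed

lemma verifier_mendable_const:
  assumes "is_verifier \<Delta> r \<psi>" "verifier_mendable \<Delta> r \<psi> T"
    and "(\<Delta> + 1) ^ (T n + 3 * r) \<le> n"
  shows "verifier_mendable \<Delta> r \<psi> (\<lambda>_. T n)"
  unfolding verifier_mendable_def
proof (intro allI impI, elim conjE)
  fix G inp lab v
  assume "bounded_graph \<Delta> G" "accepts_relaxed r \<psi> G inp lab" "v \<in> fst G"
  moreover from this(1) have "card (ball G (T n + 3 * r) v) \<le> n"
    using card_ball_le assms(3) le_trans by blast
  ultimately show "\<exists>\<mu>. is_mend r \<psi> G inp lab \<mu> v (T n)"
    using mend_of_small_ball[OF assms(1,2)] by blast
qed

theorem corollary8p6:
  fixes \<Delta> r :: nat and \<psi> :: "('i, 'o) verifier" and T :: "nat \<Rightarrow> nat"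
  assumes "is_LCL \<Delta> r \<psi>"
    and "(\<lambda>n. real (T n)) \<in> o(\<lambda>n. ln (real n))"
    and "problem_mendable \<Delta> r \<psi> T"
  shows "\<exists>c::nat. problem_mendable \<Delta> r \<psi> (\<lambda>_. c)"
proof -
  obtain \<psi>' where verifier: "is_verifier \<Delta> r \<psi>'"
    and same_solutions: "\<forall>G inp lab. bounded_graph \<Delta> G \<longrightarrow> (solution \<psi>' G inp lab \<longleftrightarrow> solution \<psi> G inp lab)"
    and mendable: "verifier_mendable \<Delta> r \<psi>' T"
    using assms(3) unfolding problem_mendable_def by blast
  obtain n where "(\<Delta> + 1) ^ T n * (\<Delta> + 1) ^ (3 * r) \<le> n"
    using eventually_happens'[OF _ eventually_pow_mult_le_of_smallo_ln[OF assms(2)]] by auto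
  then have "verifier_mendable \<Delta> r \<psi>' (\<lambda>_. T n)"
    using verifier_mendable_const[OF verifier mendable] by (simp add: power_add)
  then show ?thesis
    using verifier same_solutions unfolding problem_mendable_def by blast
qed

end
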